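(* Let $\mathcal H_A,\mathcal H_B$ be finite-dimensional Hilbert spaces, $|0_A\rangle\in\mathcal H_A$, $|0_B\rangle\in\mathcal H_B$ unit vectors, $|0\rangle=|0_A\rangle\otimes|0_B\rangle$, and let $|\phi\rangle\in\mathcal H_A\otimes\mathcal H_B$ be a unit vector. Decompose $|\phi\rangle=|x\rangle\otimes|0_B\rangle+|y\rangle$ with $|x\rangle=(\mathbb 1_A\otimes\langle 0_B|)|\phi\rangle$ and $(\mathbb 1_A\otimes\langle 0_B|)|y\rangle=0$, and assume $|y\rangle\neq0$. Fix $0<\epsilon<1$, let $|\psi\rangle=(|0\rangle+\epsilon|\phi\rangle)/\sqrt{\mathcal N}$ with $\mathcal N=1+\epsilon^2+2\epsilon\,\mathrm{Re}\langle0|\phi\rangle$, $\rho_A=\operatorname{tr}_B|\psi\rangle\langle\psi|$, $\mu=\epsilon^2\langle y|y\rangle/\mathcal N$ and $\omega=\operatorname{tr}_B|y\rangle\langle y|/\langle y|y\rangle$. Then $$\mu\,S_1(\omega)\le S_1(\rho_A)\le h_2(\mu)+\mu\,S_1(\omega),$$ where $h_2(x)=-x\log x-(1-x)\log(1-x)$.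
   Context: $S_1(\rho)=-\operatorname{tr}\rho\log\rho$ is the von Neumann entropy. One has $\rho_A=(1-\mu)|v\rangle\langle v|+\mu\,\omega$ with $|v\rangle=(|0_A\rangle+\epsilon|x\rangle)/\sqrt{\mathcal N(1-\mu)}$ a unit vector. *)

theory Defs
  imports "HOL-Analysis.Analysis" "HOL-Computational_Algebra.Polynomial"
begin

text \<open>Finite-dimensional Hilbert spaces are modelled as complex^'n for a finite index type 'n;
  the tensor product H_A \<otimes> H_B is complex^('a \<times> 'b).\<close>

definition braket :: "complex^'n::finite \<Rightarrow> complex^'n::finite \<Rightarrow> complex" where
  "braket u v = (\<Sum>i\<in>UNIV. cnj (u $ i) * v $ i)"

definition tens :: "complex^'a \<Rightarrow> complex^'b \<Rightarrow> complex^('a::finite \<times> 'b::finite)" where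
  "tens x y = (\<chi> p. x $ fst p * y $ snd p)"

definition outer :: "complex^'n::finite \<Rightarrow> complex^'n::finite \<Rightarrow> complex^'n::finite^'n" where
  "outer u v = (\<chi> i j. u $ i * cnj (v $ j))"

definition ptrB :: "complex^('a::finite \<times> 'b::finite)^('a::finite \<times> 'b::finite) \<Rightarrow> complex^'a^'a" where
  "ptrB M = (\<chi> i i'. \<Sum>j\<in>UNIV. M $ (i, j) $ (i', j))"

text \<open>(1_A \<otimes> <b|) applied to a vector of H_A \<otimes> H_B\<close>
definition contractB :: "complex^'b \<Rightarrow> complex^('a::finite \<times> 'b::finite) \<Rightarrow> complex^'a" where
  "contractB b v = (\<chi> i. \<Sum>j\<in>UNIV. cnj (b $ j) * v $ (i, j))"

definition charpoly :: "complex^'n::finite^'n \<Rightarrow> complex poly" where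
  "charpoly M = det (\<chi> i j. (if i = j then [:0, 1:] else 0) - [:M $ i $ j:])"

text \<open>von Neumann entropy S_1(\<rho>) = - tr \<rho> log \<rho> = - \<Sum> \<lambda> log \<lambda> over the eigenvalues of \<rho>
  counted with (algebraic) multiplicity, with 0 log 0 = 0; natural logarithm.\<close>
definition vN_entropy :: "complex^'n::finite^'n \<Rightarrow> real" where
  "vN_entropy \<rho> = - (\<Sum>l\<in>{l. poly (charpoly \<rho>) l = 0}.
       real (order l (charpoly \<rho>)) * (Re l * ln (Re l)))"

definition h2 :: "real \<Rightarrow> real" where
  "h2 x = - x * ln x - (1 - x) * ln (1 - x)"

end

theory Submission
  imports Defs
begin

text \<open>Because \<open>(1\<^sub>A \<otimes> \<langle>0\<^sub>B|) y = 0\<close>, the partial trace kills the cross terms and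
  \<open>\<rho>\<^sub>A = |u\<rangle>\<langle>u| + \<mu> \<omega>\<close> with \<open>u = (|0\<^sub>A\<rangle> + \<epsilon> |x\<rangle>) / \<surd>N\<close> and \<open>\<parallel>u\<parallel>\<^sup>2 = 1 - \<mu>\<close>.
  In eigenbases \<open>(e\<^sub>j, b\<^sub>j)\<close> of \<open>\<rho>\<^sub>A\<close> and \<open>(f\<^sub>i, w\<^sub>i)\<close> of \<open>\<omega>\<close> one gets
  \<open>b\<^sub>j = q\<^sub>j + \<mu> \<Sum>\<^sub>i D\<^sub>i\<^sub>j w\<^sub>i\<close>, where \<open>q\<^sub>j = |\<langle>u|e\<^sub>j\<rangle>|\<^sup>2\<close> and the matrix
  \<open>D\<^sub>i\<^sub>j = |\<langle>f\<^sub>i|e\<^sub>j\<rangle>|\<^sup>2\<close> is doubly stochastic. Concavity of \<open>-t ln t\<close>, used for the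
  average over \<open>i\<close> and then for the weights \<open>1 - \<mu>\<close> and \<open>\<mu>\<close>, gives the lower bound.
  For the upper bound, every \<open>v\<close> with \<open>|v\<rangle>\<langle>v| \<le> \<rho>\<^sub>A\<close> satisfies
  \<open>\<parallel>v\<parallel>\<^sup>2 ln \<parallel>v\<parallel>\<^sup>2 \<le> \<Sum>\<^sub>j |\<langle>v|e\<^sub>j\<rangle>|\<^sup>2 ln b\<^sub>j\<close>, a Gibbs inequality coming from
  \<open>\<langle>v|\<rho>\<^sub>A\<^sup>-\<^sup>1|v\<rangle> \<le> 1\<close>. Summing it over \<open>v = u\<close> and \<open>v = \<surd>(\<mu> w\<^sub>i) f\<^sub>i\<close> yields
  \<open>-S\<^sub>1(\<rho>\<^sub>A) \<ge> (1 - \<mu>) ln (1 - \<mu>) + \<mu> ln \<mu> - \<mu> S\<^sub>1(\<omega>)\<close>.\<close>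

lemma braket_add_right: "braket u (v + w) = braket u v + braket u w"
  by (simp add: braket_def distrib_left sum.distrib)

lemma braket_add_left: "braket (u + v) w = braket u w + braket v w"
  by (simp add: braket_def distrib_right sum.distrib)

lemma braket_diff_right: "braket u (v - w) = braket u v - braket u w"
  by (simp add: braket_def right_diff_distrib sum_subtractf)

lemma braket_diff_left: "braket (u - v) w = braket u w - braket v w"
  by (simp add: braket_def left_diff_distrib sum_subtractf)

lemma braket_smult_right: "braket u (c *s v) = c * braket u v"
  by (simp add: braket_def sum_distrib_left algebra_simps)

lemma braket_smult_left: "braket (c *s u) v = cnj c * braket u v"
  by (simp add: braket_def sum_distrib_left algebra_simps)

lemma braket_scaleR_right: "braket u (r *\<^sub>R v) = of_real r * braket u v"
  unfolding braket_def vector_scaleR_component by (simp add: sum_distrib_left algebra_simps scaleR_conv_of_real)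

lemma braket_scaleR_left: "braket (r *\<^sub>R u) v = of_real r * braket u v"
  unfolding braket_def vector_scaleR_component by (simp add: sum_distrib_left algebra_simps scaleR_conv_of_real)

lemma braket_zero_right [simp]: "braket u 0 = 0"
  by (simp add: braket_def)

lemma braket_sum_right: "braket u (\<Sum>i\<in>A. f i) = (\<Sum>i\<in>A. braket u (f i))"
  by (induct A rule: infinite_finite_induct) (simp_all add: braket_add_right)

lemma cnj_braket: "cnj (braket u v) = braket v u"
  by (simp add: braket_def mult.commute)

lemma braket_mult_braket_swap: "braket u v * braket v u = of_real ((cmod (braket u v))\<^sup>2)"
  by (metis cnj_braket complex_norm_square)

lemma cmod_braket_commute: "cmod (braket u v) = cmod (braket v u)"
  by (metis cnj_braket complex_mod_cnj)

lemma braket_self: "braket v v = of_real ((norm v)\<^sup>2)"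
proof -
  have "braket v v = (\<Sum>i\<in>UNIV. of_real ((cmod (v $ i))\<^sup>2))"
    unfolding braket_def
    by (intro sum.cong refl) (simp add: complex_norm_square mult.commute del: of_real_power)
  then show ?thesis
    by (simp add: norm_vec_def L2_set_def sum_nonneg)
qed

lemma Re_braket_eq_inner: "Re (braket u v) = inner u v"
  by (simp add: braket_def inner_vec_def Re_sum inner_complex_def)

lemma matrix_vector_mult_smult: "M *v (c *s v) = c *s (M *v (v::complex^'n))"
  by (simp add: vec_eq_iff matrix_vector_mult_def sum_distrib_left algebra_simps)

lemma matrix_vector_mult_scaleR_complex: "M *v (r *\<^sub>R v) = r *\<^sub>R (M *v (v::complex^'n))"
  unfolding vec_eq_iff matrix_vector_mult_def vector_scaleR_component
  by (simp add: sum_distrib_left algebra_simps scaleR_conv_of_real)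

lemma matrix_vector_mult_sum: "M *v (\<Sum>i\<in>A. f i) = (\<Sum>i\<in>A. M *v (f i :: complex^'n))"
  by (induct A rule: infinite_finite_induct) (simp_all add: matrix_vector_right_distrib)

lemma outer_matrix_vector_mult: "outer u u *v z = braket u z *s u"
  unfolding outer_def braket_def
  by (simp add: vec_eq_iff matrix_vector_mult_def sum_distrib_left algebra_simps)

lemma scaleR_matrix_vector_mult: "(r *\<^sub>R A) *v z = r *\<^sub>R (A *v (z::complex^'n))"
  unfolding matrix_vector_mult_def vec_eq_iff vector_scaleR_component
  by (simp add: scaleR_conv_of_real sum_distrib_left algebra_simps)

definition hermitian :: "complex^'n^'n \<Rightarrow> bool" where
  "hermitian M \<longleftrightarrow> (\<forall>i j. M $ i $ j = cnj (M $ j $ i))"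

lemma hermitian_braket_mult:
  assumes "hermitian M"
  shows "braket (M *v u) v = braket u (M *v v)"
proof -
  have "braket (M *v u) v = (\<Sum>i\<in>UNIV. \<Sum>j\<in>UNIV. cnj (M $ i $ j) * cnj (u $ j) * v $ i)"
    unfolding braket_def matrix_vector_mult_def by (simp add: sum_distrib_right)
  also have "\<dots> = (\<Sum>j\<in>UNIV. \<Sum>i\<in>UNIV. cnj (M $ i $ j) * cnj (u $ j) * v $ i)"
    by (rule sum.swap)
  also have "\<dots> = braket u (M *v v)"
    unfolding braket_def matrix_vector_mult_def
  proof (simp add: sum_distrib_left, intro sum.cong refl)
    fix i j
    have "cnj (M $ i $ j) = M $ j $ i" using assms unfolding hermitian_def by (metis complex_cnj_cnj)
    then show "cnj (M $ i $ j) * cnj (u $ j) * v $ i = cnj (u $ j) * (M $ j $ i * v $ i)" by simp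
  qed
  finally show ?thesis .
qed

lemma hermitian_outer: "hermitian (outer u u)"
  unfolding hermitian_def outer_def by simp

lemma hermitian_add: "hermitian A \<Longrightarrow> hermitian B \<Longrightarrow> hermitian (A + B)"
  unfolding hermitian_def by (metis vector_add_component complex_cnj_add)

lemma hermitian_scaleR: "hermitian A \<Longrightarrow> hermitian (r *\<^sub>R A)"
  unfolding hermitian_def vector_scaleR_component by (metis complex_cnj_scaleR)

section \<open>The spectral theorem\<close>

lemma quadratic_nonneg_imp_linear_coeff_zero:
  fixes a q :: real
  assumes nonneg: "\<And>t. 0 \<le> 2 * t * a + t\<^sup>2 * q" and "0 \<le> q"
  shows "a = 0"
proof -
  define t where "t = - a / (q + 1)"
  have t: "t * (q + 1) = - a" using \<open>0 \<le> q\<close> by (simp add: t_def)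
  have "0 \<le> (q + 1)\<^sup>2 * (2 * t * a + t\<^sup>2 * q)" using nonneg[of t] by simp
  also have "\<dots> = 2 * (t * (q + 1)) * a * (q + 1) + (t * (q + 1))\<^sup>2 * q"
    by (simp add: algebra_simps power2_eq_square)
  also have "\<dots> = - a\<^sup>2 * (q + 2)" unfolding t by (simp add: algebra_simps power2_eq_square)
  finally have "a\<^sup>2 * (q + 2) \<le> 0" by simp
  then have "a\<^sup>2 \<le> 0" using \<open>0 \<le> q\<close> by (simp add: mult_le_0_iff)
  then show ?thesis by simp
qed

lemma hermitian_maximiser_is_eigenvector:
  fixes M :: "complex^'n^'n"
  assumes herm: "hermitian M" and W: "subspace W" and inv: "\<And>z. z \<in> W \<Longrightarrow> M *v z \<in> W"
    and x: "x \<in> W" "norm x = 1"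
    and max: "\<And>z. z \<in> W \<Longrightarrow> Re (braket z (M *v z)) \<le> Re (braket x (M *v x)) * (norm z)\<^sup>2"
  shows "M *v x = complex_of_real (Re (braket x (M *v x))) *s x"
proof -
  define lam where "lam = Re (braket x (M *v x))"
  define B where "B z = lam *\<^sub>R z - M *v z" for z
  define Q where "Q z = Re (braket z (B z))" for z
  have Q_eq: "Q z = lam * (norm z)\<^sup>2 - Re (braket z (M *v z))" for z
    by (simp add: Q_def B_def braket_diff_right braket_scaleR_right braket_self)
  have Q_nonneg: "0 \<le> Q z" if "z \<in> W" for z
    using max[OF that] by (simp add: Q_eq lam_def)
  have B_herm: "braket u (B v) = braket (B u) v" for u v
    by (simp add: B_def braket_diff_right braket_diff_left braket_scaleR_right braket_scaleR_left
        hermitian_braket_mult[OF herm])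
  define d where "d = B x"
  have d: "d \<in> W"
    unfolding d_def B_def using W x inv by (intro subspace_diff subspace_scale)
  have "Q (x + t *\<^sub>R d) = 2 * t * (norm d)\<^sup>2 + t\<^sup>2 * Q d" for t
  proof -
    have "braket (x + t *\<^sub>R d) (B (x + t *\<^sub>R d)) = braket x (B x) + of_real t * braket x (B d)
        + of_real t * braket d (B x) + of_real t * of_real t * braket d (B d)"
      by (simp add: B_def matrix_vector_right_distrib matrix_vector_mult_scaleR_complex
          braket_add_left braket_add_right braket_diff_right braket_scaleR_left braket_scaleR_right
          algebra_simps)
    moreover have "braket x (B d) = braket d d" "braket d (B x) = braket d d" "Q x = 0"
      using B_herm[of x d] x(2) by (simp_all add: d_def Q_eq lam_def)
    ultimately show ?thesis
      by (simp add: Q_def braket_self power2_eq_square)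
  qed
  moreover have "x + t *\<^sub>R d \<in> W" for t using W x(1) d by (simp add: subspace_add subspace_scale)
  ultimately have "(norm d)\<^sup>2 = 0"
    using Q_nonneg[OF d] by (intro quadratic_nonneg_imp_linear_coeff_zero[of _ "Q d"]) (metis Q_nonneg)+
  then have "M *v x = lam *\<^sub>R x" by (simp add: d_def B_def)
  then show ?thesis
    unfolding lam_def[symmetric] vec_eq_iff
    by (metis vector_scaleR_component vector_smult_component scaleR_conv_of_real)
qed

lemma hermitian_invariant_subspace_has_eigenvector:
  fixes M :: "complex^'n^'n"
  assumes herm: "hermitian M" and W: "subspace W" and inv: "\<And>z. z \<in> W \<Longrightarrow> M *v z \<in> W"
    and nontrivial: "W \<noteq> {0}"
  obtains x lam where "x \<in> W" "norm x = 1" "M *v x = complex_of_real lam *s x"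
proof -
  define R where "R z = Re (braket z (M *v z))" for z
  define S where "S = sphere 0 1 \<inter> W"
  have "compact S" by (simp add: S_def compact_Int_closed closed_subspace W)
  moreover obtain z0 where "z0 \<in> W" "z0 \<noteq> 0" using nontrivial subspace_0[OF W] by blast
  then have "(1 / norm z0) *\<^sub>R z0 \<in> S" by (simp add: S_def subspace_scale[OF W])
  moreover have "continuous_on S R"
    unfolding R_def braket_def matrix_vector_mult_def by (intro continuous_intros)
  ultimately obtain x where x: "x \<in> S" and xmax: "\<And>z. z \<in> S \<Longrightarrow> R z \<le> R x"
    using continuous_attains_sup by (metis empty_iff)
  have R_scale: "R (r *\<^sub>R z) = r\<^sup>2 * R z" for r z
    by (simp add: R_def matrix_vector_mult_scaleR_complex braket_scaleR_left braket_scaleR_right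
        power2_eq_square)
  have "R z \<le> R x * (norm z)\<^sup>2" if "z \<in> W" for z
  proof (cases "z = 0")
    case False
    then have "(1 / norm z) *\<^sub>R z \<in> S" using that by (simp add: S_def subspace_scale[OF W])
    then have "R ((1 / norm z) *\<^sub>R z) \<le> R x" using xmax by blast
    then have "R z / (norm z)\<^sup>2 \<le> R x" by (simp add: R_scale power_divide)
    then show ?thesis using False by (simp add: divide_le_eq mult.commute)
  qed (simp add: R_def)
  then have "M *v x = complex_of_real (R x) *s x"
    using x unfolding R_def S_def by (intro hermitian_maximiser_is_eigenvector[OF herm W inv]) auto
  then show thesis using x that by (auto simp: S_def)
qed

(* Complex orthogonality to e i means real orthogonality to e i and \<i> e i, and these 2k vectors
   cannot span the real space complex^'n of dimension 2 CARD('n). *)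
lemma exists_nonzero_orthogonal:
  fixes e :: "nat \<Rightarrow> complex^'n"
  assumes "k < CARD('n)"
  shows "\<exists>z. z \<noteq> 0 \<and> (\<forall>i<k. braket (e i) z = 0)"
proof -
  define S where "S = e ` {..<k} \<union> (\<lambda>i. \<i> *s e i) ` {..<k}"
  have "finite S" by (simp add: S_def)
  have "card S \<le> card (e ` {..<k}) + card ((\<lambda>i. \<i> *s e i) ` {..<k})"
    unfolding S_def by (rule card_Un_le)
  also have "\<dots> \<le> k + k" by (intro add_mono card_image_le[of "{..<k}", simplified])
  finally have "dim S < DIM(complex^'n)" using assms dim_le_card'[OF \<open>finite S\<close>] by simp
  then obtain x where x: "x \<noteq> 0" "\<And>y. y \<in> span S \<Longrightarrow> orthogonal x y"
    by (rule orthogonal_to_subspace_exists) blast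
  have "braket (e i) x = 0" if "i < k" for i
  proof -
    have "orthogonal x (e i)" "orthogonal x (\<i> *s e i)"
      using that x(2) by (auto simp: S_def intro: span_base)
    then have "Re (braket (e i) x) = 0" "Re (braket (\<i> *s e i) x) = 0"
      by (auto simp: orthogonal_def Re_braket_eq_inner inner_commute)
    then show ?thesis by (simp add: braket_smult_left complex_eq_iff)
  qed
  then show ?thesis using x(1) by blast
qed

lemma hermitian_orthonormal_eigenvectors:
  fixes M :: "complex^'n^'n"
  assumes herm: "hermitian M" and "k \<le> CARD('n)"
  shows "\<exists>e l. (\<forall>i<k. \<forall>j<k. braket (e i) (e j) = (if i = j then 1 else 0)) \<and>
    (\<forall>i<k. M *v e i = complex_of_real (l i) *s e i)"
  using assms(2)
proof (induction k)
  case (Suc k)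
  then obtain e l where orth: "\<forall>i<k. \<forall>j<k. braket (e i) (e j) = (if i = j then 1 else 0)"
    and eig: "\<forall>i<k. M *v e i = complex_of_real (l i) *s e i" by auto
  define W where "W = {z. \<forall>i<k. braket (e i) z = 0}"
  have W: "subspace W"
    by (auto simp: W_def subspace_def braket_add_right braket_scaleR_right)
  have inv: "M *v z \<in> W" if "z \<in> W" for z
    using that eig by (simp add: W_def hermitian_braket_mult[OF herm, symmetric] braket_smult_left)
  have "W \<noteq> {0}"
    using exists_nonzero_orthogonal[of k e] Suc.prems by (auto simp: W_def)
  then obtain x lam where x: "x \<in> W" "norm x = 1" "M *v x = complex_of_real lam *s x"
    using hermitian_invariant_subspace_has_eigenvector[OF herm W inv] by blast
  have "braket x x = 1" using x(2) by (simp add: braket_self)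
  moreover have "braket x (e i) = 0" "braket (e i) x = 0" if "i < k" for i
    using x(1) that cnj_braket[of "e i" x] by (auto simp: W_def)
  ultimately show ?case using orth eig x(3)
    by (intro exI[of _ "e(k := x)"] exI[of _ "l(k := lam)"]) (auto simp: less_Suc_eq)
qed simp

definition onb :: "('n \<Rightarrow> complex^'n) \<Rightarrow> bool" where
  "onb e \<longleftrightarrow> (\<forall>i j. braket (e i) (e j) = (if i = j then 1 else 0))"

lemma hermitian_eigenbasis:
  fixes M :: "complex^'n^'n"
  assumes "hermitian M"
  obtains e :: "'n \<Rightarrow> complex^'n" and l :: "'n \<Rightarrow> real"
  where "onb e" "\<And>i. M *v e i = complex_of_real (l i) *s e i"
proof -
  obtain e l where orth: "\<forall>i<CARD('n). \<forall>j<CARD('n). braket (e i) (e j) = (if i = j then 1 else 0)"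
    and eig: "\<forall>i<CARD('n). M *v e i = complex_of_real (l i) *s e i"
    using hermitian_orthonormal_eigenvectors[OF assms, of "CARD('n)"] by auto
  obtain h :: "'n \<Rightarrow> nat" where h: "bij_betw h UNIV {..<CARD('n)}"
    using ex_bij_betw_finite_nat[of "UNIV::'n set"] by (auto simp: lessThan_atLeast0)
  have "h i < CARD('n)" "h i = h j \<longleftrightarrow> i = j" for i j
    using h by (auto simp: bij_betw_def inj_on_def)
  with orth eig show thesis
    by (intro that[of "e \<circ> h" "l \<circ> h"]) (simp_all add: onb_def)
qed

lemma onb_columns_unitary:
  fixes e :: "'n \<Rightarrow> complex^'n"
  assumes "onb e"
  shows "(\<chi> r c. e c $ r) ** (\<chi> c r. cnj (e c $ r)) = mat 1"
proof -
  have "(\<chi> c r. cnj (e c $ r)) ** (\<chi> r c. e c $ r) = mat 1"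
    using assms by (simp add: vec_eq_iff matrix_matrix_mult_def onb_def mat_def braket_def)
  then show ?thesis by (simp add: matrix_left_right_inverse)
qed

lemma onb_completeness:
  assumes "onb e"
  shows "(\<Sum>c\<in>UNIV. e c $ r * cnj (e c $ r')) = (if r = r' then 1 else 0)"
  using arg_cong[OF onb_columns_unitary[OF assms], of "\<lambda>A. A $ r $ r'"]
  by (simp add: matrix_matrix_mult_def mat_def)

lemma onb_expansion:
  assumes "onb e"
  shows "z = (\<Sum>i\<in>UNIV. braket (e i) z *s e i)"
proof -
  have "(\<Sum>i\<in>UNIV. braket (e i) z *s e i) $ r = (\<Sum>i\<in>UNIV. \<Sum>r'\<in>UNIV. cnj (e i $ r') * z $ r' * e i $ r)"
    for r by (simp add: sum_component braket_def sum_distrib_right)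
  also have "\<dots> r = (\<Sum>r'\<in>UNIV. z $ r' * (\<Sum>i\<in>UNIV. e i $ r * cnj (e i $ r')))" for r
    by (subst sum.swap) (simp add: sum_distrib_left mult_ac)
  also have "\<dots> r = z $ r" for r
    by (simp add: onb_completeness[OF assms] if_distrib[of "\<lambda>x. _ * x"] cong: if_cong)
  finally show ?thesis by (simp add: vec_eq_iff)
qed

lemma braket_onb_sum:
  assumes "onb e"
  shows "braket (e j) (\<Sum>i\<in>UNIV. c i *s e i) = c j"
proof -
  have "braket (e j) (\<Sum>i\<in>UNIV. c i *s e i) = (\<Sum>i\<in>UNIV. if i = j then c j else 0)"
    using assms unfolding onb_def by (intro trans[OF braket_sum_right] sum.cong refl) (simp add: braket_smult_right)
  then show ?thesis by simp
qed

lemma parseval: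
  assumes "onb e"
  shows "(\<Sum>i\<in>UNIV. (cmod (braket (e i) z))\<^sup>2) = (norm z)\<^sup>2"
proof -
  have "braket z z = (\<Sum>i\<in>UNIV. braket (e i) z * braket z (e i))"
    by (subst (2) onb_expansion[OF assms]) (simp add: braket_sum_right braket_smult_right)
  then have "complex_of_real ((norm z)\<^sup>2) = of_real (\<Sum>i\<in>UNIV. (cmod (braket (e i) z))\<^sup>2)"
    by (simp add: braket_self braket_mult_braket_swap)
  then show ?thesis by (metis of_real_eq_iff)
qed

lemma norm_onb:
  assumes "onb e"
  shows "norm (e i) = 1"
proof -
  have "braket (e i) (e i) = 1" using assms by (simp add: onb_def)
  then have "(norm (e i))\<^sup>2 = 1" by (metis braket_self of_real_eq_1_iff)
  then show ?thesis using norm_ge_zero[of "e i"] by (auto simp: power2_eq_1_iff)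
qed

lemma trace_eq_sum_onb:
  assumes "onb e"
  shows "trace M = (\<Sum>i\<in>UNIV. braket (e i) (M *v e i))"
proof -
  have "(\<Sum>i\<in>UNIV. braket (e i) (M *v e i))
      = (\<Sum>i\<in>UNIV. \<Sum>r\<in>UNIV. \<Sum>r'\<in>UNIV. M $ r $ r' * (e i $ r' * cnj (e i $ r)))"
    by (simp add: braket_def matrix_vector_mult_def sum_distrib_left mult_ac)
  also have "\<dots> = (\<Sum>r\<in>UNIV. \<Sum>i\<in>UNIV. \<Sum>r'\<in>UNIV. M $ r $ r' * (e i $ r' * cnj (e i $ r)))"
    by (rule sum.swap)
  also have "\<dots> = (\<Sum>r\<in>UNIV. \<Sum>r'\<in>UNIV. \<Sum>i\<in>UNIV. M $ r $ r' * (e i $ r' * cnj (e i $ r)))"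
    by (rule sum.cong[OF refl]) (rule sum.swap)
  also have "\<dots> = (\<Sum>r\<in>UNIV. \<Sum>r'\<in>UNIV. M $ r $ r' * (\<Sum>i\<in>UNIV. e i $ r' * cnj (e i $ r)))"
    by (simp add: sum_distrib_left)
  also have "\<dots> = trace M"
    by (simp add: onb_completeness[OF assms] trace_def if_distrib[of "\<lambda>x. _ * x"] cong: if_cong)
  finally show ?thesis ..
qed

lemma braket_eigenvector:
  assumes "onb e" and "M *v e i = complex_of_real c *s e i"
  shows "braket (e i) (M *v e i) = of_real c"
  using assms by (simp add: onb_def braket_smult_right)

lemma braket_mult_eigenbasis:
  assumes "onb e" and eig: "\<And>i. M *v e i = complex_of_real (l i) *s e i"
  shows "braket z (M *v z) = of_real (\<Sum>i\<in>UNIV. l i * (cmod (braket (e i) z))\<^sup>2)"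
proof -
  have "M *v z = (\<Sum>i\<in>UNIV. (braket (e i) z * of_real (l i)) *s e i)"
    by (subst onb_expansion[OF assms(1)]) (simp add: matrix_vector_mult_sum matrix_vector_mult_smult eig)
  then have "braket z (M *v z) = (\<Sum>i\<in>UNIV. of_real (l i) * (braket (e i) z * braket z (e i)))"
    by (simp add: braket_sum_right braket_smult_right algebra_simps)
  then show ?thesis
    by (simp add: braket_mult_braket_swap)
qed

section \<open>Von Neumann entropy in an eigenbasis\<close>

lemma poly_charpoly: "poly (charpoly M) z = det (\<chi> i j. (if i = j then z else 0) - M $ i $ j)"
  unfolding charpoly_def det_def
  by (simp add: poly_sum poly_prod if_distrib[of "\<lambda>p. poly p z"] cong: if_cong)

lemma det_eigenbasis:
  fixes M :: "complex^'n^'n"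
  assumes onb: "onb e" and eig: "\<And>i. M *v e i = complex_of_real (l i) *s e i"
  shows "det (\<chi> i j. (if i = j then z else 0) - M $ i $ j) = (\<Prod>i\<in>UNIV. z - of_real (l i))"
proof -
  define A where "A = (\<chi> i j. (if i = j then z else 0) - M $ i $ j)"
  define U where "U = (\<chi> r c. e c $ r)"
  define D where "D = (\<chi> i j. if i = j then z - of_real (l i) else (0::complex))"
  have unitary: "U ** (\<chi> c r. cnj (e c $ r)) = mat 1"
    unfolding U_def by (rule onb_columns_unitary[OF onb])
  have eig_entry: "(\<Sum>k\<in>UNIV. M $ r $ k * e c $ k) = of_real (l c) * e c $ r" for r c
    using eig[of c] by (simp add: vec_eq_iff matrix_vector_mult_def)
  have "(A ** U) $ r $ c = (U ** D) $ r $ c" for r c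
  proof -
    have "(A ** U) $ r $ c = (\<Sum>k\<in>UNIV. (if r = k then z else 0) * e c $ k - M $ r $ k * e c $ k)"
      by (simp add: matrix_matrix_mult_def A_def U_def left_diff_distrib)
    also have "\<dots> = z * e c $ r - of_real (l c) * e c $ r"
      by (simp add: sum_subtractf eig_entry if_distrib[of "\<lambda>x. x * _"] cong: if_cong)
    also have "\<dots> = (U ** D) $ r $ c"
      by (simp add: matrix_matrix_mult_def U_def D_def if_distrib[of "\<lambda>x. _ * x"] algebra_simps
          cong: if_cong)
    finally show ?thesis .
  qed
  then have AU: "A ** U = U ** D" by (simp add: vec_eq_iff)
  have "det A = det (A ** (U ** (\<chi> c r. cnj (e c $ r))))" by (simp add: unitary)
  also have "\<dots> = det D * det (U ** (\<chi> c r. cnj (e c $ r)))"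
    by (simp add: matrix_mul_assoc AU det_mul)
  also have "\<dots> = (\<Prod>i\<in>UNIV. z - of_real (l i))"
    by (simp add: unitary D_def det_diagonal)
  finally show ?thesis by (simp add: A_def)
qed

lemma charpoly_eigenbasis:
  fixes M :: "complex^'n^'n"
  assumes "onb e" and "\<And>i. M *v e i = complex_of_real (l i) *s e i"
  shows "charpoly M = (\<Prod>i\<in>UNIV. [:- of_real (l i), 1:])"
proof -
  have "poly (charpoly M) z = poly (\<Prod>i\<in>UNIV. [:- of_real (l i), 1:]) z" for z
    by (simp add: poly_charpoly det_eigenbasis[OF assms] poly_prod)
  then show ?thesis using poly_eq_poly_eq_iff by blast
qed

lemma order_linear_poly:
  fixes x a :: "'a::idom"
  shows "order x [:- a, 1:] = (if x = a then 1 else 0)"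
  using order_power_n_n[of a 1] by (auto intro: order_0I)

lemma order_prod_linear_polys:
  fixes c :: "'i \<Rightarrow> 'a::idom"
  assumes "finite A"
  shows "order x (\<Prod>i\<in>A. [:- c i, 1:]) = card {i\<in>A. c i = x}"
  using assms
proof (induction A rule: finite_induct)
  case (insert j F)
  have "[:- c j, 1:] * (\<Prod>i\<in>F. [:- c i, 1:]) \<noteq> 0"
    using insert.hyps(1) by (subst no_zero_divisors) (auto simp: prod_zero_iff)
  then have "order x (\<Prod>i\<in>insert j F. [:- c i, 1:]) = order x [:- c j, 1:] + order x (\<Prod>i\<in>F. [:- c i, 1:])"
    unfolding prod.insert[OF insert.hyps] by (rule order_mult)
  also have "\<dots> = card {i\<in>insert j F. c i = x}"
  proof -
    have "{i\<in>insert j F. c i = x} = (if c j = x then insert j {i\<in>F. c i = x} else {i\<in>F. c i = x})"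
      by auto
    then show ?thesis using insert by (simp add: order_linear_poly)
  qed
  finally show ?case .
qed simp

lemma vN_entropy_eigenbasis:
  fixes M :: "complex^'n^'n"
  assumes "onb e" and "\<And>i. M *v e i = complex_of_real (l i) *s e i"
  shows "vN_entropy M = - (\<Sum>i\<in>UNIV. l i * ln (l i))"
proof -
  define c where "c i = complex_of_real (l i)" for i
  define g where "g x = Re x * ln (Re x)" for x :: complex
  have cp: "charpoly M = (\<Prod>i\<in>UNIV. [:- c i, 1:])"
    unfolding c_def by (rule charpoly_eigenbasis[OF assms])
  have roots: "{x. poly (charpoly M) x = 0} = range c"
    unfolding cp by (auto simp: poly_prod prod_zero_iff)
  have "(\<Sum>x\<in>{x. poly (charpoly M) x = 0}. real (order x (charpoly M)) * g x)
      = (\<Sum>x\<in>range c. \<Sum>i\<in>{i\<in>UNIV. c i = x}. g (c i))"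
    unfolding roots by (intro sum.cong refl) (simp add: cp order_prod_linear_polys)
  also have "\<dots> = (\<Sum>i\<in>UNIV. g (c i))"
    by (rule sum.image_gen[symmetric]) simp
  finally show ?thesis unfolding vN_entropy_def g_def c_def by simp
qed

section \<open>Inequalities for the function \<open>t ln t\<close>\<close>

lemma neg_mult_ln_le_tangent:
  fixes y t :: real
  assumes "0 \<le> y" "0 < t"
  shows "- y * ln y \<le> - y * ln t + t - y"
proof (cases "y = 0")
  case False
  then have y: "0 < y" using assms by simp
  have "ln (t / y) \<le> t / y - 1" using y assms by (intro ln_le_minus_one) simp
  then have "y * ln (t / y) \<le> y * (t / y - 1)" using y by (intro mult_left_mono) auto
  then have "y * (ln t - ln y) \<le> t - y" using y assms by (simp add: ln_div right_diff_distrib)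
  then show ?thesis by (simp add: algebra_simps)
qed (use assms in simp)

lemma neg_mult_ln_concave:
  fixes D w :: "'i \<Rightarrow> real"
  assumes "finite I" and D: "\<And>i. i \<in> I \<Longrightarrow> 0 \<le> D i" "sum D I = 1"
    and w: "\<And>i. i \<in> I \<Longrightarrow> 0 \<le> w i"
  shows "(\<Sum>i\<in>I. D i * (- w i * ln (w i))) \<le> - (\<Sum>i\<in>I. D i * w i) * ln (\<Sum>i\<in>I. D i * w i)"
proof -
  define m where "m = (\<Sum>i\<in>I. D i * w i)"
  have "0 \<le> m" unfolding m_def using D w by (intro sum_nonneg) auto
  show ?thesis
  proof (cases "m = 0")
    case True
    then have "\<forall>i\<in>I. D i * w i = 0"
      using assms unfolding m_def by (subst sum_nonneg_eq_0_iff[symmetric]) auto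
    then have "(\<Sum>i\<in>I. D i * (- w i * ln (w i))) = 0"
      by (intro sum.neutral) (metis mult_eq_0_iff mult_minus_left neg_0_equal_iff_equal mult.assoc)
    then show ?thesis using True by (simp add: m_def)
  next
    case False
    then have "0 < m" using \<open>0 \<le> m\<close> by simp
    have "(\<Sum>i\<in>I. D i * (- w i * ln (w i))) \<le> (\<Sum>i\<in>I. D i * (- w i * ln m + m - w i))"
      using D w neg_mult_ln_le_tangent \<open>0 < m\<close> by (intro sum_mono mult_left_mono) auto
    also have "\<dots> = (\<Sum>i\<in>I. (- ln m) * (D i * w i) + m * D i - D i * w i)"
      by (intro sum.cong refl) (simp add: algebra_simps)
    also have "\<dots> = (- ln m) * (\<Sum>i\<in>I. D i * w i) + m * sum D I - (\<Sum>i\<in>I. D i * w i)"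
      by (simp only: sum.distrib sum_subtractf sum_distrib_left)
    also have "\<dots> = - m * ln m" using D by (simp add: m_def)
    finally show ?thesis by (simp add: m_def)
  qed
qed

lemma mult_neg_mult_ln_le_mixture:
  fixes p m mu :: real
  assumes "0 \<le> p" "p \<le> 1" "0 \<le> m" "0 \<le> mu" "mu \<le> 1"
  shows "mu * (- m * ln m) \<le> - ((1 - mu) * p + mu * m) * ln ((1 - mu) * p + mu * m)"
proof -
  have "(\<Sum>b\<in>UNIV. (if b then mu else 1 - mu) * (- (if b then m else p) * ln (if b then m else p)))
      \<le> - (\<Sum>b\<in>UNIV. (if b then mu else 1 - mu) * (if b then m else p))
        * ln (\<Sum>b\<in>UNIV. (if b then mu else 1 - mu) * (if b then m else p))"
    using assms by (intro neg_mult_ln_concave) (auto simp: UNIV_bool)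
  moreover have "0 \<le> (1 - mu) * (- p * ln p)"
    using assms by (cases "p = 0") (auto intro!: mult_nonneg_nonneg simp: mult_nonneg_nonpos)
  ultimately show ?thesis by (simp add: UNIV_bool algebra_simps)
qed

lemma sum_mult_ln_sum_le:
  fixes Q b :: "'j \<Rightarrow> real"
  assumes "finite J" and Q: "\<And>j. j \<in> J \<Longrightarrow> 0 \<le> Q j" "\<And>j. j \<in> J \<Longrightarrow> Q j \<le> b j"
    and sub: "(\<Sum>j\<in>J. Q j / b j) \<le> 1"
  shows "sum Q J * ln (sum Q J) \<le> (\<Sum>j\<in>J. Q j * ln (b j))"
proof (cases "sum Q J = 0")
  case True
  then have "\<forall>j\<in>J. Q j = 0" using assms by (subst sum_nonneg_eq_0_iff[symmetric]) auto
  then show ?thesis using True by simp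
next
  case False
  define T where "T = sum Q J"
  have T: "0 < T" using False Q unfolding T_def by (metis sum_nonneg order_le_less)
  have "(\<Sum>j\<in>J. Q j * (ln T - ln (b j))) \<le> (\<Sum>j\<in>J. Q j * (T / b j - 1))"
  proof (intro sum_mono)
    fix j assume j: "j \<in> J"
    show "Q j * (ln T - ln (b j)) \<le> Q j * (T / b j - 1)"
    proof (cases "Q j = 0")
      case False
      then have "0 < Q j" "0 < b j" using Q[OF j] by linarith+
      have "ln (T / b j) \<le> T / b j - 1" using T \<open>0 < b j\<close> by (intro ln_le_minus_one) simp
      then have "ln T - ln (b j) \<le> T / b j - 1" using T \<open>0 < b j\<close> by (simp add: ln_div)
      then show ?thesis using \<open>0 < Q j\<close> by (intro mult_left_mono) auto
    qed simp
  qed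
  also have "\<dots> = T * (\<Sum>j\<in>J. Q j / b j) - T"
    by (simp add: algebra_simps sum_subtractf sum_distrib_left T_def)
  also have "\<dots> \<le> 0" using sub T by (simp add: mult_le_cancel_left1)
  finally have "(\<Sum>j\<in>J. Q j * (ln T - ln (b j))) \<le> 0" .
  moreover have "(\<Sum>j\<in>J. Q j * ln T) = T * ln T" by (simp add: T_def sum_distrib_right)
  ultimately show ?thesis
    by (simp add: T_def[symmetric] right_diff_distrib sum_subtractf)
qed

lemma mixture_entropy_lower_bound_scalar:
  fixes D :: "'i::finite \<Rightarrow> 'j::finite \<Rightarrow> real" and w :: "'i \<Rightarrow> real" and q b :: "'j \<Rightarrow> real"
  assumes D: "\<And>i j. 0 \<le> D i j" "\<And>j. (\<Sum>i\<in>UNIV. D i j) = 1" "\<And>i. (\<Sum>j\<in>UNIV. D i j) = 1"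
    and w: "\<And>i. 0 \<le> w i" and q: "\<And>j. 0 \<le> q j" "\<And>j. q j \<le> 1 - mu" and "0 \<le> mu"
    and b: "\<And>j. b j = q j + mu * (\<Sum>i\<in>UNIV. D i j * w i)"
  shows "mu * - (\<Sum>i\<in>UNIV. w i * ln (w i)) \<le> - (\<Sum>j\<in>UNIV. b j * ln (b j))"
proof -
  have "mu * (\<Sum>i\<in>UNIV. D i j * (- w i * ln (w i))) \<le> - b j * ln (b j)" for j
  proof -
    define p where "p = (if mu < 1 then q j / (1 - mu) else 0)"
    have "mu \<le> 1" using q[of j] by simp
    have p: "q j = (1 - mu) * p" "0 \<le> p" "p \<le> 1"
      using q[of j] \<open>mu \<le> 1\<close> by (auto simp: p_def field_simps)
    have m: "0 \<le> (\<Sum>i\<in>UNIV. D i j * w i)"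
      using D w by (intro sum_nonneg mult_nonneg_nonneg)
    have "(\<Sum>i\<in>UNIV. D i j * (- w i * ln (w i)))
        \<le> - (\<Sum>i\<in>UNIV. D i j * w i) * ln (\<Sum>i\<in>UNIV. D i j * w i)"
      using D w by (intro neg_mult_ln_concave) auto
    then have "mu * (\<Sum>i\<in>UNIV. D i j * (- w i * ln (w i)))
        \<le> mu * (- (\<Sum>i\<in>UNIV. D i j * w i) * ln (\<Sum>i\<in>UNIV. D i j * w i))"
      using \<open>0 \<le> mu\<close> by (rule mult_left_mono)
    also have "\<dots> \<le> - b j * ln (b j)"
      using mult_neg_mult_ln_le_mixture[OF p(2,3) m \<open>0 \<le> mu\<close> \<open>mu \<le> 1\<close>] by (simp add: b p(1))
    finally show ?thesis .
  qed
  then have "(\<Sum>j\<in>UNIV. mu * (\<Sum>i\<in>UNIV. D i j * (- w i * ln (w i)))) \<le> (\<Sum>j\<in>UNIV. - b j * ln (b j))"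
    by (rule sum_mono)
  moreover have "(\<Sum>j\<in>UNIV. \<Sum>i\<in>UNIV. D i j * (- w i * ln (w i))) = (\<Sum>i\<in>UNIV. - w i * ln (w i))"
    by (subst sum.swap) (simp only: sum_distrib_right[symmetric] D(3) mult_1_left)
  ultimately show ?thesis
    by (simp add: sum_distrib_left[symmetric] sum_negf)
qed

lemma mixture_entropy_upper_bound_scalar:
  fixes D :: "'i::finite \<Rightarrow> 'j::finite \<Rightarrow> real" and w :: "'i \<Rightarrow> real" and q b :: "'j \<Rightarrow> real"
  assumes w: "\<And>i. 0 \<le> w i" "(\<Sum>i\<in>UNIV. w i) = 1" and "0 \<le> mu"
    and b: "\<And>j. b j = q j + mu * (\<Sum>i\<in>UNIV. D i j * w i)"
    and pure: "(1 - mu) * ln (1 - mu) \<le> (\<Sum>j\<in>UNIV. q j * ln (b j))"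
    and mixed: "\<And>i. mu * w i * ln (mu * w i) \<le> mu * w i * (\<Sum>j\<in>UNIV. D i j * ln (b j))"
  shows "- (\<Sum>j\<in>UNIV. b j * ln (b j)) \<le> h2 mu + mu * - (\<Sum>i\<in>UNIV. w i * ln (w i))"
proof -
  have "(\<Sum>j\<in>UNIV. b j * ln (b j))
      = (\<Sum>j\<in>UNIV. q j * ln (b j)) + (\<Sum>j\<in>UNIV. \<Sum>i\<in>UNIV. mu * w i * (D i j * ln (b j)))"
    by (simp add: b algebra_simps sum.distrib sum_distrib_left sum_distrib_right)
  also have "\<dots> = (\<Sum>j\<in>UNIV. q j * ln (b j)) + (\<Sum>i\<in>UNIV. mu * w i * (\<Sum>j\<in>UNIV. D i j * ln (b j)))"
    by (subst sum.swap) (simp add: sum_distrib_left)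
  finally have split: "(\<Sum>j\<in>UNIV. b j * ln (b j))
      = (\<Sum>j\<in>UNIV. q j * ln (b j)) + (\<Sum>i\<in>UNIV. mu * w i * (\<Sum>j\<in>UNIV. D i j * ln (b j)))" .
  have "mu * w i * ln (mu * w i) = mu * ln mu * w i + mu * (w i * ln (w i))" for i
    using w(1)[of i] \<open>0 \<le> mu\<close>
    by (cases "mu = 0 \<or> w i = 0") (auto simp: ln_mult algebra_simps)
  then have "(\<Sum>i\<in>UNIV. mu * w i * ln (mu * w i)) = mu * ln mu + mu * (\<Sum>i\<in>UNIV. w i * ln (w i))"
    by (simp add: sum.distrib sum_distrib_left[symmetric] w(2))
  moreover have "(\<Sum>i\<in>UNIV. mu * w i * ln (mu * w i)) \<le> (\<Sum>i\<in>UNIV. mu * w i * (\<Sum>j\<in>UNIV. D i j * ln (b j)))"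
    by (rule sum_mono[OF mixed])
  ultimately show ?thesis
    using pure split by (simp add: h2_def)
qed

section \<open>Mixing a pure state into a density matrix\<close>

definition density_matrix :: "complex^'n^'n \<Rightarrow> bool" where
  "density_matrix M \<longleftrightarrow> hermitian M \<and> (\<forall>z. 0 \<le> Re (braket z (M *v z))) \<and> trace M = 1"

lemma density_matrix_eigenvalues:
  assumes "density_matrix M" and "onb e" and eig: "\<And>i. M *v e i = complex_of_real (l i) *s e i"
  shows "0 \<le> l i" and "(\<Sum>i\<in>UNIV. l i) = 1"
proof -
  have l: "l i = Re (braket (e i) (M *v e i))" for i
    by (simp add: braket_eigenvector[OF assms(2) eig])
  show "0 \<le> l i" using assms(1) by (simp add: l density_matrix_def)
  have "complex_of_real (\<Sum>i\<in>UNIV. l i) = trace M"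
    by (simp add: trace_eq_sum_onb[OF assms(2)] braket_eigenvector[OF assms(2) eig])
  moreover have "trace M = 1" using assms(1) by (simp add: density_matrix_def)
  ultimately show "(\<Sum>i\<in>UNIV. l i) = 1" by (metis of_real_eq_1_iff)
qed

lemma outer_le_imp_mult_ln_le:
  fixes M :: "complex^'n^'n"
  assumes onb: "onb e" and eig: "\<And>j. M *v e j = complex_of_real (b j) *s e j"
    and dom: "\<And>z. (cmod (braket v z))\<^sup>2 \<le> Re (braket z (M *v z))"
  shows "(norm v)\<^sup>2 * ln ((norm v)\<^sup>2) \<le> (\<Sum>j\<in>UNIV. (cmod (braket v (e j)))\<^sup>2 * ln (b j))"
proof -
  define Q where "Q j = (cmod (braket v (e j)))\<^sup>2" for j
  have Q_le: "Q j \<le> b j" for j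
    using dom[of "e j"] by (simp add: Q_def braket_eigenvector[OF onb eig])
  define s where "s = (\<Sum>j\<in>UNIV. Q j / b j)"
  \<comment> \<open>Testing the hypothesis on \<open>z = M\<^sup>-\<^sup>1 v\<close> gives \<open>s\<^sup>2 \<le> s\<close> for \<open>s = \<langle>v|M\<^sup>-\<^sup>1|v\<rangle>\<close>.\<close>
  define z where "z = (\<Sum>j\<in>UNIV. (braket (e j) v / of_real (b j)) *s e j)"
  have "braket v z = (\<Sum>j\<in>UNIV. braket (e j) v * braket v (e j) / of_real (b j))"
    by (simp add: z_def braket_sum_right braket_smult_right)
  also have "\<dots> = of_real s"
    by (simp add: s_def Q_def braket_mult_braket_swap cmod_braket_commute[of v])
  finally have vz: "braket v z = of_real s" .
  have ez: "braket (e j) z = braket (e j) v / of_real (b j)" for j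
    unfolding z_def by (rule braket_onb_sum[OF onb])
  have "Re (braket z (M *v z)) = (\<Sum>j\<in>UNIV. b j * (cmod (braket (e j) z))\<^sup>2)"
    by (simp add: braket_mult_eigenbasis[OF onb eig])
  also have "\<dots> = s"
    unfolding s_def ez
    by (intro sum.cong refl) (simp add: Q_def norm_divide power_divide cmod_braket_commute[of v] power2_eq_square)
  finally have "s\<^sup>2 \<le> s" using dom[of z] vz by simp
  then have "s \<le> 1" by (cases "s \<le> 1") (auto simp: power2_eq_square)
  have "(\<Sum>j\<in>UNIV. Q j) * ln (\<Sum>j\<in>UNIV. Q j) \<le> (\<Sum>j\<in>UNIV. Q j * ln (b j))"
    using Q_le \<open>s \<le> 1\<close> by (intro sum_mult_ln_sum_le) (auto simp: Q_def s_def)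
  moreover have "(\<Sum>j\<in>UNIV. Q j) = (norm v)\<^sup>2"
    using parseval[OF onb, of v] by (simp add: Q_def cmod_braket_commute[of v])
  ultimately show ?thesis by (simp add: Q_def)
qed

lemma quadratic_form_pure_mixture:
  assumes "onb f" and "\<And>i. omega *v f i = complex_of_real (w i) *s f i"
  shows "Re (braket z ((outer u u + mu *\<^sub>R omega) *v z))
    = (cmod (braket u z))\<^sup>2 + mu * (\<Sum>i\<in>UNIV. w i * (cmod (braket (f i) z))\<^sup>2)"
  by (simp add: matrix_vector_mult_add_rdistrib outer_matrix_vector_mult scaleR_matrix_vector_mult braket_add_right
      braket_smult_right braket_scaleR_right braket_mult_braket_swap cmod_braket_commute[of z]
      braket_mult_eigenbasis[OF assms])

lemma pure_mixture_eigenvalues: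
  assumes e: "onb e" and eig_rho: "\<And>j. (outer u u + mu *\<^sub>R omega) *v e j = complex_of_real (b j) *s e j"
    and f: "onb f" and eig_omega: "\<And>i. omega *v f i = complex_of_real (w i) *s f i"
  shows "b j = (cmod (braket u (e j)))\<^sup>2 + mu * (\<Sum>i\<in>UNIV. (cmod (braket (f i) (e j)))\<^sup>2 * w i)"
  using quadratic_form_pure_mixture[OF f eig_omega, of "e j" u mu]
  by (simp add: braket_eigenvector[OF e eig_rho] mult.commute)

lemma pure_mixture_component_mult_ln_le:
  assumes e: "onb e" and eig_rho: "\<And>j. (outer u u + mu *\<^sub>R omega) *v e j = complex_of_real (b j) *s e j"
    and f: "onb f" and eig_omega: "\<And>i. omega *v f i = complex_of_real (w i) *s f i"
    and w: "\<And>i. 0 \<le> w i" and "0 \<le> mu"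
  shows "mu * w i * ln (mu * w i) \<le> mu * w i * (\<Sum>j\<in>UNIV. (cmod (braket (f i) (e j)))\<^sup>2 * ln (b j))"
proof -
  define v where "v = sqrt (mu * w i) *\<^sub>R f i"
  have "0 \<le> mu * w i" using w \<open>0 \<le> mu\<close> by simp
  then have v: "(cmod (braket v z))\<^sup>2 = mu * w i * (cmod (braket (f i) z))\<^sup>2" for z
    by (simp add: v_def braket_scaleR_left norm_mult power_mult_distrib)
  have "(cmod (braket v z))\<^sup>2 \<le> Re (braket z ((outer u u + mu *\<^sub>R omega) *v z))" for z
  proof -
    have "w i * (cmod (braket (f i) z))\<^sup>2 \<le> (\<Sum>i'\<in>UNIV. w i' * (cmod (braket (f i') z))\<^sup>2)"
      using w by (intro member_le_sum mult_nonneg_nonneg) auto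
    then show ?thesis
      using \<open>0 \<le> mu\<close> by (simp add: v quadratic_form_pure_mixture[OF f eig_omega] mult.assoc
          add_increasing mult_left_mono)
  qed
  from outer_le_imp_mult_ln_le[OF e eig_rho this]
  have "(norm v)\<^sup>2 * ln ((norm v)\<^sup>2) \<le> (\<Sum>j\<in>UNIV. mu * w i * (cmod (braket (f i) (e j)))\<^sup>2 * ln (b j))"
    by (simp add: v)
  moreover have "(norm v)\<^sup>2 = mu * w i"
    using \<open>0 \<le> mu * w i\<close> norm_onb[OF f] by (simp add: v_def power_mult_distrib)
  ultimately show ?thesis by (simp add: sum_distrib_left mult.assoc)
qed

lemma pure_mixture_entropy_bounds:
  fixes omega :: "complex^'n^'n" and u :: "complex^'n" and mu :: real
  assumes omega: "density_matrix omega" and u: "(norm u)\<^sup>2 + mu = 1" and "0 \<le> mu"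
  shows "mu * vN_entropy omega \<le> vN_entropy (outer u u + mu *\<^sub>R omega)
    \<and> vN_entropy (outer u u + mu *\<^sub>R omega) \<le> h2 mu + mu * vN_entropy omega"
proof -
  have "hermitian (outer u u + mu *\<^sub>R omega)"
    using omega by (simp add: density_matrix_def hermitian_add hermitian_outer hermitian_scaleR)
  then obtain e b where e: "onb e"
    and eig_rho: "\<And>j. (outer u u + mu *\<^sub>R omega) *v e j = complex_of_real (b j) *s e j"
    using hermitian_eigenbasis by blast
  obtain f w where f: "onb f" and eig_omega: "\<And>i. omega *v f i = complex_of_real (w i) *s f i"
    using omega hermitian_eigenbasis by (metis density_matrix_def)
  note w = density_matrix_eigenvalues[OF omega f eig_omega]
  define q where "q j = (cmod (braket u (e j)))\<^sup>2" for j
  define D where "D i j = (cmod (braket (f i) (e j)))\<^sup>2" for i j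
  have b: "b j = q j + mu * (\<Sum>i\<in>UNIV. D i j * w i)" for j
    unfolding q_def D_def by (rule pure_mixture_eigenvalues[OF e eig_rho f eig_omega])
  have D: "0 \<le> D i j" "(\<Sum>i\<in>UNIV. D i j) = 1" "(\<Sum>j\<in>UNIV. D i j) = 1" for i j
    using parseval[OF f, of "e j"] parseval[OF e, of "f i"]
    by (simp_all add: D_def norm_onb[OF e] norm_onb[OF f] cmod_braket_commute[of "f i"])
  have "(\<Sum>j\<in>UNIV. q j) = 1 - mu"
    using parseval[OF e, of u] u by (simp add: q_def cmod_braket_commute[of u])
  then have q: "0 \<le> q j" "q j \<le> 1 - mu" for j
    using member_le_sum[of j UNIV q] by (auto simp: q_def)
  have "(cmod (braket u z))\<^sup>2 \<le> Re (braket z ((outer u u + mu *\<^sub>R omega) *v z))" for z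
    using w \<open>0 \<le> mu\<close>
    by (simp add: quadratic_form_pure_mixture[OF f eig_omega] sum_nonneg)
  from outer_le_imp_mult_ln_le[OF e eig_rho this]
  have pure: "(1 - mu) * ln (1 - mu) \<le> (\<Sum>j\<in>UNIV. q j * ln (b j))"
    unfolding q_def using u by (metis add_diff_cancel_right')
  have mixed: "mu * w i * ln (mu * w i) \<le> mu * w i * (\<Sum>j\<in>UNIV. D i j * ln (b j))" for i
    unfolding D_def using pure_mixture_component_mult_ln_le[OF e eig_rho f eig_omega w(1) \<open>0 \<le> mu\<close>] .
  have "vN_entropy (outer u u + mu *\<^sub>R omega) = - (\<Sum>j\<in>UNIV. b j * ln (b j))"
    and "vN_entropy omega = - (\<Sum>i\<in>UNIV. w i * ln (w i))"
    by (rule vN_entropy_eigenbasis[OF e eig_rho], rule vN_entropy_eigenbasis[OF f eig_omega])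
  then show ?thesis
    using mixture_entropy_lower_bound_scalar[OF D(1-3) w(1) q \<open>0 \<le> mu\<close> b]
      mixture_entropy_upper_bound_scalar[OF w \<open>0 \<le> mu\<close> b pure mixed]
    by simp
qed

section \<open>Bipartite vectors and the partial trace\<close>

lemma sum_UNIV_prod:
  "(\<Sum>p\<in>(UNIV::('a::finite \<times> 'b::finite) set). g p) = (\<Sum>i\<in>UNIV. \<Sum>j\<in>UNIV. g (i, j))"
  by (simp add: sum.cartesian_product)

lemma braket_tens: "braket (tens a b) (tens c d) = braket a c * braket b d"
  unfolding braket_def tens_def by (simp add: sum_UNIV_prod sum_product algebra_simps)

lemma braket_tens_left: "braket (tens a b) v = braket a (contractB b v)"
  unfolding braket_def tens_def contractB_def by (simp add: sum_UNIV_prod sum_distrib_left algebra_simps)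

lemma contractB_tens: "contractB b (tens x b') = braket b b' *s x"
  unfolding braket_def tens_def contractB_def by (simp add: vec_eq_iff sum_distrib_left algebra_simps)

lemma contractB_diff: "contractB b (v - w) = contractB b v - contractB b w"
  unfolding contractB_def by (simp add: vec_eq_iff right_diff_distrib sum_subtractf)

lemma contractB_scaleR: "contractB b (r *\<^sub>R v) = r *\<^sub>R contractB b v"
  unfolding contractB_def vec_eq_iff vector_scaleR_component
  by (simp add: sum_distrib_left scaleR_conv_of_real algebra_simps)

lemma tens_add_left: "tens (a + c) b = tens a b + tens c b"
  unfolding tens_def by (simp add: vec_eq_iff distrib_right)

lemma tens_scaleR_left: "tens (r *\<^sub>R a) b = r *\<^sub>R tens a b"
  unfolding tens_def vec_eq_iff vector_scaleR_component by (simp add: scaleR_conv_of_real)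

lemma norm_tens: "norm (tens a b) = norm a * norm b"
proof -
  have "complex_of_real ((norm (tens a b))\<^sup>2) = braket a a * braket b b"
    by (simp only: braket_self[symmetric] braket_tens)
  then have "(norm (tens a b))\<^sup>2 = (norm a * norm b)\<^sup>2"
    by (metis braket_self of_real_mult of_real_eq_iff power_mult_distrib)
  then show ?thesis by (simp add: power2_eq_iff_nonneg)
qed

lemma contractB_residual:
  assumes "norm b = 1"
  shows "contractB b (v - tens (contractB b v) b) = 0"
  using assms by (simp add: contractB_diff contractB_tens braket_self)

lemma norm_tens_add_orthogonal:
  assumes "norm b = 1" and "contractB b Y = 0"
  shows "(norm (tens v b + Y))\<^sup>2 = (norm v)\<^sup>2 + (norm Y)\<^sup>2"
proof -
  have "orthogonal (tens v b) Y"
    using assms(2) by (simp add: orthogonal_def Re_braket_eq_inner[symmetric] braket_tens_left)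
  then show ?thesis
    using assms(1) by (simp add: norm_add_Pythagorean norm_tens)
qed

lemma norm_add_scaleR_sq:
  "(norm (p + r *\<^sub>R q))\<^sup>2 = (norm p)\<^sup>2 + r\<^sup>2 * (norm q)\<^sup>2 + 2 * r * Re (braket p q)"
proof -
  have "(norm (p + r *\<^sub>R q))\<^sup>2 = inner p p + r\<^sup>2 * inner q q + 2 * r * inner p q"
    unfolding power2_norm_eq_inner by (simp add: inner_add inner_commute[of q p] power2_eq_square algebra_simps)
  then show ?thesis by (simp add: dot_square_norm Re_braket_eq_inner)
qed

lemma outer_scaleR: "outer (r *\<^sub>R y) (r *\<^sub>R y) = r\<^sup>2 *\<^sub>R outer y y"
  unfolding outer_def vec_eq_iff vector_scaleR_component
  by (simp add: scaleR_conv_of_real power2_eq_square)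

lemma ptrB_scaleR: "ptrB (r *\<^sub>R M) = r *\<^sub>R ptrB M"
  unfolding ptrB_def vec_eq_iff vector_scaleR_component
  by (simp add: scaleR_conv_of_real sum_distrib_left)

lemma trace_ptrB: "trace (ptrB M) = trace M"
  by (simp add: trace_def ptrB_def sum_UNIV_prod)

lemma hermitian_ptrB:
  assumes "hermitian M"
  shows "hermitian (ptrB M)"
proof -
  have "(\<Sum>j\<in>UNIV. M $ (i, j) $ (i', j)) = (\<Sum>j\<in>UNIV. cnj (M $ (i', j) $ (i, j)))" for i i'
    using assms unfolding hermitian_def by (intro sum.cong refl) blast
  then show ?thesis
    unfolding hermitian_def ptrB_def by (simp add: cnj_sum)
qed

lemma braket_tens_axis_mult:
  "braket (tens z (axis k 1)) (M *v tens z (axis k 1))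
    = (\<Sum>i\<in>UNIV. \<Sum>i'\<in>UNIV. cnj (z $ i) * M $ (i, k) $ (i', k) * z $ i')"
proof -
  have sum_if: "(\<Sum>n\<in>UNIV. if P then f n else 0) = (if P then \<Sum>n\<in>UNIV. f n else 0)"
    for P and f :: "'a \<Rightarrow> complex" by (cases P) simp_all
  show ?thesis
    unfolding braket_def matrix_vector_mult_def tens_def axis_def
    by (simp add: sum_UNIV_prod sum_distrib_left mult_ac sum_if if_distrib[of cnj]
        if_distrib[of "\<lambda>x. _ * x"] if_distrib[of "\<lambda>x. x * _"] cong: if_cong)
qed

lemma braket_ptrB_mult:
  "braket z (ptrB M *v z) = (\<Sum>k\<in>UNIV. braket (tens z (axis k 1)) (M *v tens z (axis k 1)))"
proof -
  have "braket z (ptrB M *v z) = (\<Sum>i\<in>UNIV. \<Sum>i'\<in>UNIV. \<Sum>k\<in>UNIV. cnj (z $ i) * M $ (i, k) $ (i', k) * z $ i')"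
    unfolding braket_def ptrB_def matrix_vector_mult_def by (simp add: sum_distrib_left sum_distrib_right mult_ac)
  also have "\<dots> = (\<Sum>i\<in>UNIV. \<Sum>k\<in>UNIV. \<Sum>i'\<in>UNIV. cnj (z $ i) * M $ (i, k) $ (i', k) * z $ i')"
    by (rule sum.cong[OF refl], rule sum.swap)
  also have "\<dots> = (\<Sum>k\<in>UNIV. \<Sum>i\<in>UNIV. \<Sum>i'\<in>UNIV. cnj (z $ i) * M $ (i, k) $ (i', k) * z $ i')"
    by (rule sum.swap)
  finally show ?thesis by (simp add: braket_tens_axis_mult)
qed

lemma density_matrix_outer:
  assumes "norm y = 1"
  shows "density_matrix (outer y y)"
proof -
  have "Re (braket z (outer y y *v z)) = (cmod (braket y z))\<^sup>2" for z
    by (simp add: outer_matrix_vector_mult braket_smult_right braket_mult_braket_swap cmod_braket_commute[of z])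
  moreover have "trace (outer y y) = cnj (braket y y)"
    by (simp add: trace_def outer_def braket_def cnj_sum)
  ultimately show ?thesis
    using assms by (simp add: density_matrix_def hermitian_outer braket_self)
qed

lemma density_matrix_ptrB: "density_matrix M \<Longrightarrow> density_matrix (ptrB M)"
  unfolding density_matrix_def
  by (simp add: hermitian_ptrB trace_ptrB braket_ptrB_mult Re_sum sum_nonneg)

lemma ptrB_outer_orthogonal_split:
  fixes v :: "complex^'a::finite" and b :: "complex^'b::finite" and Y :: "complex^('a \<times> 'b)"
  assumes "norm b = 1" and "contractB b Y = 0"
  shows "ptrB (outer (tens v b + Y) (tens v b + Y)) = outer v v + ptrB (outer Y Y)"
proof -
  have c0: "(\<Sum>j\<in>UNIV. b $ j * cnj (Y $ (i, j))) = 0" for i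
    using arg_cong[OF assms(2), of "\<lambda>w. cnj (w $ i)"] unfolding contractB_def by (simp add: cnj_sum)
  have bb: "(\<Sum>j\<in>UNIV. b $ j * cnj (b $ j)) = 1"
    using arg_cong[OF braket_self[of b], of cnj] assms(1) unfolding braket_def by (simp add: cnj_sum mult.commute)
  have "(\<Sum>j\<in>UNIV. (v $ i * b $ j + Y $ (i, j)) * cnj (v $ i' * b $ j + Y $ (i', j))) =
        v $ i * cnj (v $ i') * (\<Sum>j\<in>UNIV. b $ j * cnj (b $ j))
        + v $ i * (\<Sum>j\<in>UNIV. b $ j * cnj (Y $ (i', j)))
        + cnj (v $ i') * cnj (\<Sum>j\<in>UNIV. b $ j * cnj (Y $ (i, j)))
        + (\<Sum>j\<in>UNIV. Y $ (i, j) * cnj (Y $ (i', j)))" for i i'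
    by (simp add: cnj_sum sum.distrib sum_distrib_left algebra_simps)
  then show ?thesis
    unfolding ptrB_def outer_def tens_def by (simp add: vec_eq_iff c0 bb)
qed

lemma reduced_state_entropy_bounds:
  fixes v :: "complex^'a" and b :: "complex^'b" and Y :: "complex^('a \<times> 'b)"
  assumes b: "norm b = 1" and Y: "contractB b Y = 0" "Y \<noteq> 0"
    and unit: "norm (tens v b + Y) = 1"
  defines "omega \<equiv> (1 / (norm Y)\<^sup>2) *\<^sub>R ptrB (outer Y Y)"
  shows "(norm Y)\<^sup>2 * vN_entropy omega \<le> vN_entropy (ptrB (outer (tens v b + Y) (tens v b + Y)))
    \<and> vN_entropy (ptrB (outer (tens v b + Y) (tens v b + Y))) \<le> h2 ((norm Y)\<^sup>2) + (norm Y)\<^sup>2 * vN_entropy omega"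
proof -
  have "ptrB (outer (tens v b + Y) (tens v b + Y)) = outer v v + (norm Y)\<^sup>2 *\<^sub>R omega"
    using Y by (simp add: ptrB_outer_orthogonal_split[OF b Y(1)] omega_def)
  moreover have "omega = ptrB (outer ((1 / norm Y) *\<^sub>R Y) ((1 / norm Y) *\<^sub>R Y))"
    by (simp add: omega_def outer_scaleR ptrB_scaleR power_divide)
  then have "density_matrix omega"
    using Y(2) by (simp add: density_matrix_ptrB density_matrix_outer)
  moreover have "(norm v)\<^sup>2 + (norm Y)\<^sup>2 = 1"
    using norm_tens_add_orthogonal[OF b Y(1), of v] unit by simp
  ultimately show ?thesis
    using pure_mixture_entropy_bounds[of omega v "(norm Y)\<^sup>2"] by simp
qed

theorem mainTheorem2:
  fixes a0 :: "complex^'a" and b0 :: "complex^'b" and phi :: "complex^('a \<times> 'b)"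
    and eps :: real
  assumes "norm a0 = 1" and "norm b0 = 1" and "norm phi = 1"
    and "0 < eps" and "eps < 1"
  defines "x \<equiv> contractB b0 phi"
  defines "y \<equiv> phi - tens x b0"
  defines "N \<equiv> 1 + eps\<^sup>2 + 2 * eps * Re (braket (tens a0 b0) phi)"
  defines "psi \<equiv> (1 / sqrt N) *\<^sub>R (tens a0 b0 + eps *\<^sub>R phi)"
  defines "rhoA \<equiv> ptrB (outer psi psi)"
  defines "mu \<equiv> eps\<^sup>2 * Re (braket y y) / N"
  defines "omega \<equiv> (1 / Re (braket y y)) *\<^sub>R ptrB (outer y y)"
  assumes "y \<noteq> 0"
  shows "mu * vN_entropy omega \<le> vN_entropy rhoA \<and>
         vN_entropy rhoA \<le> h2 mu + mu * vN_entropy omega"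
proof -
  have N: "N = (norm (tens a0 b0 + eps *\<^sub>R phi))\<^sup>2"
    using assms(1-3) by (simp add: N_def norm_add_scaleR_sq norm_tens)
  have "0 < 1 - eps" using assms(5) by simp
  also have "\<dots> \<le> norm (tens a0 b0 + eps *\<^sub>R phi)"
    using norm_diff_ineq[of "tens a0 b0" "eps *\<^sub>R phi"] assms(1-4) by (simp add: norm_tens)
  finally have "0 < N" unfolding N by simp
  define v where "v = (1 / sqrt N) *\<^sub>R (a0 + eps *\<^sub>R x)"
  define Y where "Y = (1 / sqrt N) *\<^sub>R (eps *\<^sub>R y)"
  have decomp: "tens a0 b0 + eps *\<^sub>R phi = tens (a0 + eps *\<^sub>R x) b0 + eps *\<^sub>R y"
    by (simp add: y_def tens_add_left tens_scaleR_left scaleR_diff_right)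
  have psi: "psi = tens v b0 + Y"
    unfolding psi_def v_def Y_def decomp tens_scaleR_left by (rule scaleR_add_right)
  have "norm psi = 1"
    using \<open>0 < N\<close> by (simp add: psi_def N)
  have "contractB b0 Y = 0"
    using assms(2) by (simp add: Y_def y_def x_def contractB_scaleR contractB_residual)
  moreover have "Y \<noteq> 0" using assms(4) \<open>0 < N\<close> \<open>y \<noteq> 0\<close> by (simp add: Y_def)
  moreover have "mu = (norm Y)\<^sup>2"
    using \<open>0 < N\<close> assms(4) by (simp add: mu_def Y_def braket_self power_mult_distrib power_divide)
  moreover have "omega = (1 / (norm Y)\<^sup>2) *\<^sub>R ptrB (outer Y Y)"
    using \<open>0 < N\<close> assms(4) \<open>y \<noteq> 0\<close>
    by (simp add: omega_def Y_def braket_self outer_scaleR ptrB_scaleR power_mult_distrib power_divide)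
  ultimately show ?thesis
    using reduced_state_entropy_bounds[OF assms(2)] \<open>norm psi = 1\<close> psi by (simp add: rhoA_def)
qed

end
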